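(* Let $Y\in\{0,1\}$, $\mathbf{B}\in\mathbb{R}^n$, and for $i=1,\dots,r$ let $Z_i\in\mathbb{R}$, $A_i\in\{0,1\}$. Let $\sigma(x)=1/(1+e^{-x})$. Assume: (C1) $\mathbf{p}(Y=1\mid\mathbf{b})=\sigma(\mathbf{w}^\top\mathbf{b}+t)$ for some $\mathbf{w}\in\mathbb{R}^n$, $t\in\mathbb{R}$; (C2) for all $\mathcal{I}\subseteq[r]$: $\mathbf{p}(\mathbf{A}_{\mathcal{I}}=\mathbf{1}\mid\mathbf{b},y)=\prod_{i\in\mathcal{I}}\mathbf{p}(A_i=1\mid\mathbf{b},y)$; (C3) for all $\mathcal{I}\subseteq[r]$: $\mathbf{p}(\mathbf{z}_{\mathcal{I}}\mid\mathbf{b},y,\mathbf{A}_{\mathcal{I}}=\mathbf{1})=\prod_{i\in\mathcal{I}}\mathbf{p}(z_i\mid\mathbf{b},y,A_i=1)$; (C4) there is a function $N(\mathbf{b})>0$ and $\mathbf{u}_i\in\mathbb{R}^n$, $\lambda_i\in\mathbb{R}$ with $\mathbf{p}(A_i=1\mid\mathbf{b},Y=1)=N(\mathbf{b})\sigma(\mathbf{u}_i^\top\mathbf{b}+\lambda_i)$ and $\mathbf{p}(A_i=1\mid\mathbf{b},Y=0)=N(\mathbf{b})-\mathbf{p}(A_i=1\mid\mathbf{b},Y=1)$; (C5) $(Z_i\mid\mathbf{b},y,A_i=1)\sim\mathcal{N}(\mathbf{v}_i^\top\mathbf{b}+\tau_i(y),\eta^2)$ for some $\mathbf{v}_i\in\mathbb{R}^n$,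 $\tau_i(0),\tau_i(1)\in\mathbb{R}$, $\eta>0$. Then for every $\mathcal{I}\subseteq[r]$, $$\frac{\mathbf{p}(Y=1\mid\mathbf{b},\mathbf{z}_{\mathcal{I}},\mathbf{A}_{\mathcal{I}}=\mathbf{1})}{\mathbf{p}(Y=0\mid\mathbf{b},\mathbf{z}_{\mathcal{I}},\mathbf{A}_{\mathcal{I}}=\mathbf{1})}=\exp\Big[\mathbf{w}^\top\mathbf{b}+t+\sum_{i\in\mathcal{I}}\big((\mathbf{u}_i-\boldsymbol\gamma_i)^\top\mathbf{b}+\beta_i z_i+\lambda_i+\theta_i\big)\Big],$$ where $\beta_i=\eta^{-2}(\tau_i(1)-\tau_i(0))$, $\boldsymbol\gamma_i=\beta_i\mathbf{v}_i$, and $\theta_i=\tfrac12\eta^{-2}(\tau_i(0)^2-\tau_i(1)^2)$. In particular, each such conditional distribution is of logistic-regression form.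
   Context: For a vector $\mathbf{v}$ and $\mathcal{I}\subseteq[r]=\{1,\dots,r\}$, $\mathbf{v}_{\mathcal{I}}$ is the subvector with indices in $\mathcal{I}$; $\mathbf{A}_{\mathcal{I}}=\mathbf{1}$ means $A_i=1$ for all $i\in\mathcal{I}$ (other features marginalized). $Z_i$ is only observed when $A_i=1$. *)

theory Defs
  imports "HOL-Probability.Distributions"
begin

definition sigmoid :: "real \<Rightarrow> real" where
  "sigmoid x = 1 / (1 + exp (- x))"

text \<open>The model is described through its conditional densities / probabilities
 (Y is encoded as bool, True = 1):
  pY b          = p(Y = 1 | b)            (so p(Y = 0 | b) = 1 - pY b)
  pA I b y      = p(A_I = 1 | b, y)
  pZ I z b y    = p(z_I | b, y, A_I = 1)  (density; only z i for i in I matters).\<close>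

definition cond_joint ::
  "(real^'n::finite \<Rightarrow> real) \<Rightarrow> (nat set \<Rightarrow> (real^'n) \<Rightarrow> bool \<Rightarrow> real)
   \<Rightarrow> (nat set \<Rightarrow> (nat \<Rightarrow> real) \<Rightarrow> (real^'n) \<Rightarrow> bool \<Rightarrow> real)
   \<Rightarrow> nat set \<Rightarrow> (real^'n) \<Rightarrow> (nat \<Rightarrow> real) \<Rightarrow> bool \<Rightarrow> real" where
  "cond_joint pY pA pZ I b z y =
     (if y then pY b else 1 - pY b) * pA I b y * pZ I z b y"

definition posterior ::
  "(real^'n::finite \<Rightarrow> real) \<Rightarrow> (nat set \<Rightarrow> (real^'n) \<Rightarrow> bool \<Rightarrow> real)
   \<Rightarrow> (nat set \<Rightarrow> (nat \<Rightarrow> real) \<Rightarrow> (real^'n) \<Rightarrow> bool \<Rightarrow> real)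
   \<Rightarrow> nat set \<Rightarrow> (real^'n) \<Rightarrow> (nat \<Rightarrow> real) \<Rightarrow> bool \<Rightarrow> real" where
  "posterior pY pA pZ I b z y =
     cond_joint pY pA pZ I b z y /
       (cond_joint pY pA pZ I b z True + cond_joint pY pA pZ I b z False)"

end

theory Submission
  imports Defs
begin

text \<open>By Bayes' rule the posterior odds equal the ratio of the joint densities for Y = 1
  and Y = 0. Conditional independence factors this ratio into the prior odds exp (w\<bullet>b + t)
  and one factor per observed feature i. Each factor is exponential-affine: in the
  missingness probability N(b) cancels and sigmoid s / (1 - sigmoid s) = exp s, and two
  normal densities with equal variance differ by the exponential of an affine function
  of z.\<close>

lemma sigmoid_eq_exp_div: "sigmoid x = exp x / (1 + exp x)"
  unfolding sigmoid_def exp_minus by (simp add: field_simps)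

lemma one_minus_sigmoid_pos: "0 < 1 - sigmoid x"
  unfolding sigmoid_eq_exp_div by (simp add: field_simps add_pos_pos)

lemma sigmoid_eq_exp_mult_complement: "sigmoid x = exp x * (1 - sigmoid x)"
proof -
  have "0 < 1 + exp x"
    by (simp add: add_pos_pos)
  then show ?thesis
    unfolding sigmoid_eq_exp_div by (simp add: field_simps)
qed

lemma normal_density_mean_shift:
  assumes "0 < \<sigma>"
  shows "normal_density (m + a) \<sigma> x =
    exp ((a - c) / \<sigma>\<^sup>2 * x - (a - c) / \<sigma>\<^sup>2 * m + (c\<^sup>2 - a\<^sup>2) / (2 * \<sigma>\<^sup>2))
    * normal_density (m + c) \<sigma> x"
proof -
  have exponent: "- (x - (m + a))\<^sup>2 / (2 * \<sigma>\<^sup>2) =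
     ((a - c) / \<sigma>\<^sup>2 * x - (a - c) / \<sigma>\<^sup>2 * m + (c\<^sup>2 - a\<^sup>2) / (2 * \<sigma>\<^sup>2))
     + (- (x - (m + c))\<^sup>2 / (2 * \<sigma>\<^sup>2))"
    using assms by (simp add: field_simps power2_eq_square)
  show ?thesis
    unfolding normal_density_def exponent exp_add by simp
qed

lemma prod_eq_exp_sum_mult:
  assumes "\<And>i. i \<in> I \<Longrightarrow> f i = exp (e i) * g i"
  shows "prod f I = exp (sum e I) * prod g I"
proof -
  have "prod f I = (\<Prod>i\<in>I. exp (e i) * g i)"
    using assms by (rule prod.cong[OF refl])
  then show ?thesis
    by (cases "finite I") (simp_all add: exp_sum prod.distrib)
qed

lemma feature_odds:
  fixes u v b :: "'a::real_inner" and c0 c1 \<sigma> :: real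
  assumes "0 < N" "0 < \<sigma>"
    and pos: "a1 = N * sigmoid (u \<bullet> b + l)"
    and neg: "a0 = N - a1"
  defines "\<beta> \<equiv> (c1 - c0) / \<sigma>\<^sup>2"
  shows "a1 * normal_density (v \<bullet> b + c1) \<sigma> x =
      exp ((u - \<beta> *\<^sub>R v) \<bullet> b + \<beta> * x + l + (c0\<^sup>2 - c1\<^sup>2) / (2 * \<sigma>\<^sup>2))
      * (a0 * normal_density (v \<bullet> b + c0) \<sigma> x)"
    and "0 < a0 * normal_density (v \<bullet> b + c0) \<sigma> x"
proof -
  let ?s = "sigmoid (u \<bullet> b + l)"
  have a0: "a0 = N * (1 - ?s)"
    using pos neg by (simp add: algebra_simps)
  have "a1 = exp (u \<bullet> b + l) * a0"
    unfolding pos a0 by (subst sigmoid_eq_exp_mult_complement) simp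
  then show "a1 * normal_density (v \<bullet> b + c1) \<sigma> x =
      exp ((u - \<beta> *\<^sub>R v) \<bullet> b + \<beta> * x + l + (c0\<^sup>2 - c1\<^sup>2) / (2 * \<sigma>\<^sup>2))
      * (a0 * normal_density (v \<bullet> b + c0) \<sigma> x)"
    unfolding normal_density_mean_shift[OF \<open>0 < \<sigma>\<close>, of "v \<bullet> b" c1 x c0] \<beta>_def
    by (simp add: exp_add[symmetric] inner_diff_left algebra_simps)
  show "0 < a0 * normal_density (v \<bullet> b + c0) \<sigma> x"
    unfolding a0 using assms(1,2) one_minus_sigmoid_pos normal_density_pos by simp
qed

lemma posterior_odds:
  assumes "cond_joint pY pA pZ I b z True = E * cond_joint pY pA pZ I b z False"
    and "0 < cond_joint pY pA pZ I b z False" "0 \<le> E"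
  shows "posterior pY pA pZ I b z True / posterior pY pA pZ I b z False = E"
proof -
  have "0 < cond_joint pY pA pZ I b z True + cond_joint pY pA pZ I b z False"
    using assms by (simp add: add_nonneg_pos)
  then show ?thesis
    using assms unfolding posterior_def by simp
qed

theorem mainTheorem3:
  fixes r :: nat
    and pY :: "real^'n \<Rightarrow> real"
    and pA :: "nat set \<Rightarrow> real^'n \<Rightarrow> bool \<Rightarrow> real"
    and pZ :: "nat set \<Rightarrow> (nat \<Rightarrow> real) \<Rightarrow> real^'n \<Rightarrow> bool \<Rightarrow> real"
    and w :: "real^'n" and t :: real
    and u v :: "nat \<Rightarrow> real^'n" and lam :: "nat \<Rightarrow> real"
    and \<tau> :: "nat \<Rightarrow> bool \<Rightarrow> real" and \<eta> :: real
  assumes C1: "\<And>b. pY b = sigmoid (w \<bullet> b + t)"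
    and C2: "\<And>I b y. I \<subseteq> {1..r} \<Longrightarrow> pA I b y = (\<Prod>i\<in>I. pA {i} b y)"
    and C3: "\<And>I z b y. I \<subseteq> {1..r} \<Longrightarrow> pZ I z b y = (\<Prod>i\<in>I. pZ {i} z b y)"
    and C4: "\<exists>N :: real^'n \<Rightarrow> real. \<forall>b. N b > 0 \<and>
               (\<forall>i\<in>{1..r}. pA {i} b True = N b * sigmoid (u i \<bullet> b + lam i)
                           \<and> pA {i} b False = N b - pA {i} b True)"
    and \<eta>_pos: "\<eta> > 0"
    and C5: "\<And>i z b y. i \<in> {1..r} \<Longrightarrow>
               pZ {i} z b y = normal_density (v i \<bullet> b + \<tau> i y) \<eta> (z i)"
  shows "\<forall>I b z. I \<subseteq> {1..r} \<longrightarrow>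
     (let \<beta> = (\<lambda>i. (\<tau> i True - \<tau> i False) / \<eta>\<^sup>2);
          \<gamma> = (\<lambda>i. \<beta> i *\<^sub>R v i);
          \<theta> = (\<lambda>i. (\<tau> i False ^ 2 - \<tau> i True ^ 2) / (2 * \<eta>\<^sup>2))
      in posterior pY pA pZ I b z True / posterior pY pA pZ I b z False
         = exp (w \<bullet> b + t +
               (\<Sum>i\<in>I. (u i - \<gamma> i) \<bullet> b + \<beta> i * z i + lam i + \<theta> i)))"
  unfolding Let_def
proof (intro allI impI)
  fix I b z
  assume I: "I \<subseteq> {1..r}"
  obtain N where N: "0 < N b"
    "\<And>i. i \<in> {1..r} \<Longrightarrow> pA {i} b True = N b * sigmoid (u i \<bullet> b + lam i)
                         \<and> pA {i} b False = N b - pA {i} b True"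
    using C4 by blast
  let ?\<beta> = "\<lambda>i. (\<tau> i True - \<tau> i False) / \<eta>\<^sup>2"
  let ?e = "\<lambda>i. (u i - ?\<beta> i *\<^sub>R v i) \<bullet> b + ?\<beta> i * z i + lam i
                 + (\<tau> i False ^ 2 - \<tau> i True ^ 2) / (2 * \<eta>\<^sup>2)"
  define f where "f y i = pA {i} b y * pZ {i} z b y" for y i
  have f: "f True i = exp (?e i) * f False i" "0 < f False i" if "i \<in> I" for i
    using that I N feature_odds[OF N(1) \<eta>_pos, of "pA {i} b True" "u i" b "lam i" "pA {i} b False"]
    unfolding f_def by (auto simp: C5)
  have features: "prod (f True) I = exp (sum ?e I) * prod (f False) I"
    by (rule prod_eq_exp_sum_mult) (rule f(1))
  have joint: "cond_joint pY pA pZ I b z y = (if y then pY b else 1 - pY b) * prod (f y) I" for y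
    unfolding cond_joint_def f_def C2[OF I] C3[OF I] prod.distrib by simp
  have "cond_joint pY pA pZ I b z True
      = exp (w \<bullet> b + t + sum ?e I) * cond_joint pY pA pZ I b z False"
    unfolding joint C1 using features
    by (subst sigmoid_eq_exp_mult_complement) (simp add: exp_add)
  moreover have "0 < cond_joint pY pA pZ I b z False"
    unfolding joint C1 using one_minus_sigmoid_pos f(2) by (simp add: prod_pos)
  ultimately show "posterior pY pA pZ I b z True / posterior pY pA pZ I b z False
      = exp (w \<bullet> b + t + sum ?e I)"
    by (intro posterior_odds) simp_all
qed

end
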